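(* Let $n,m\ge 2$ be integers and let $P_n,P_m$ be paths on $n$ and $m$ vertices. Then $AT(P_n+_S P_m)=2$ if $n=m=2$, and $AT(P_n+_S P_m)=3$ otherwise.
   Context: For an orientation $D$, a subdigraph is Eulerian if every vertex has equal in- and outdegree in it; $D$ is an AT-orientation if the numbers of Eulerian subgraphs with an even and with an odd number of arcs differ; $AT(G)$ is the smallest $k$ such that $G$ has an AT-orientation of maximum outdegree at most $k-1$. $S(G)$ is obtained from $G$ by subdividing each edge once, with vertex set identified with $V(G)\cup E(G)$. $G+_S H$ has vertex set $(V(G)\cup E(G))\times V(H)$, with $(u_1,u_2)\sim(v_1,v_2)$ iff [$u_1=v_1\in V(G)$ and $u_2v_2\in E(H)$] or [$u_2=v_2$ and $u_1v_1\in E(S(G))$]. *)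

theory Defs
  imports Main
begin

text \<open>A (finite simple) graph is a pair (V, E) of a vertex set and a set of 2-element edges.\<close>
type_synonym 'a graph = "'a set \<times> 'a set set"

definition path_graph :: "nat \<Rightarrow> nat graph" where
  "path_graph n = ({0..<n}, {{i, Suc i} | i. Suc i < n})"

text \<open>Subdivision S(G): vertex set V(G) \<union> E(G) (as a disjoint sum), u ~ e iff u \<in> e.\<close>
definition subdiv :: "'a graph \<Rightarrow> ('a + 'a set) graph" where
  "subdiv G = (Inl ` fst G \<union> Inr ` snd G, {{Inl u, Inr e} | u e. e \<in> snd G \<and> u \<in> e})"

definition sprod :: "'a graph \<Rightarrow> 'b graph \<Rightarrow> (('a + 'a set) \<times> 'b) graph" where
  "sprod G H = (fst (subdiv G) \<times> fst H,
     {{(u1, u2), (v1, v2)} | u1 u2 v1 v2.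
        (u1 = v1 \<and> u1 \<in> Inl ` fst G \<and> {u2, v2} \<in> snd H) \<or>
        (u2 = v2 \<and> u2 \<in> fst H \<and> {u1, v1} \<in> snd (subdiv G))})"

definition is_orientation :: "'a graph \<Rightarrow> ('a \<times> 'a) set \<Rightarrow> bool" where
  "is_orientation G D \<longleftrightarrow>
     D \<subseteq> {(u, v). {u, v} \<in> snd G \<and> u \<noteq> v} \<and>
     (\<forall>u v. {u, v} \<in> snd G \<and> u \<noteq> v \<longrightarrow> ((u, v) \<in> D \<longleftrightarrow> (v, u) \<notin> D))"

definition outdeg :: "('a \<times> 'a) set \<Rightarrow> 'a \<Rightarrow> nat" where
  "outdeg D v = card {w. (v, w) \<in> D}"

definition indeg :: "('a \<times> 'a) set \<Rightarrow> 'a \<Rightarrow> nat" where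
  "indeg D v = card {w. (w, v) \<in> D}"

definition eulerian :: "'a set \<Rightarrow> ('a \<times> 'a) set \<Rightarrow> bool" where
  "eulerian V A \<longleftrightarrow> (\<forall>v\<in>V. indeg A v = outdeg A v)"

definition AT_orientation :: "'a graph \<Rightarrow> ('a \<times> 'a) set \<Rightarrow> bool" where
  "AT_orientation G D \<longleftrightarrow>
     card {A. A \<subseteq> D \<and> eulerian (fst G) A \<and> even (card A)}
     \<noteq> card {A. A \<subseteq> D \<and> eulerian (fst G) A \<and> odd (card A)}"

definition AT_number :: "'a graph \<Rightarrow> nat" where
  "AT_number G = (LEAST k. \<exists>D. is_orientation G D \<and> AT_orientation G D \<and>
                              (\<forall>v\<in>fst G. outdeg D v + 1 \<le> k))"

end

theory Submission
  imports Defs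
begin

(* An acyclic orientation has no nonempty Eulerian subgraph, so it is an AT-orientation.
   Making every subdivision vertex a source and orienting each copy of P_m along the path
   gives an acyclic orientation of P_n +_S P_m of maximum outdegree 2, whence AT <= 3.
   Conversely, if every outdegree is at most 1, sending each edge to its tail is injective,
   so no subgraph has more edges than vertices; but P_n +_S P_m contains P_2 +_S P_3
   (10 edges, 9 vertices) or P_3 +_S P_2 (11 edges, 10 vertices) unless n = m = 2.
   Finally P_2 +_S P_2 is a 6-cycle; oriented cyclically, its only Eulerian subgraphs are
   the empty one and the whole cycle, both of even size, so AT = 2 there. *)

lemma finite_out_neighbours: "finite D \<Longrightarrow> finite {w. (v, w) \<in> D}"
  by (rule finite_subset[of _ "snd ` D"]) force+

lemma finite_in_neighbours: "finite D \<Longrightarrow> finite {w. (w, v) \<in> D}"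
  by (rule finite_subset[of _ "fst ` D"]) force+

lemma outdeg_pos_iff: "finite D \<Longrightarrow> 0 < outdeg D v \<longleftrightarrow> (\<exists>w. (v, w) \<in> D)"
  by (simp add: outdeg_def card_gt_0_iff finite_out_neighbours)

lemma outdeg_le_card: "{w. (v, w) \<in> D} \<subseteq> B \<Longrightarrow> finite B \<Longrightarrow> outdeg D v \<le> card B"
  unfolding outdeg_def by (rule card_mono)

lemma is_orientationI:
  assumes "\<And>u v. (u, v) \<in> D \<Longrightarrow> {u, v} \<in> snd G \<and> u \<noteq> v"
    and "\<And>u v. {u, v} \<in> snd G \<Longrightarrow> u \<noteq> v \<Longrightarrow> (u, v) \<in> D \<or> (v, u) \<in> D"
    and "\<And>u v. (u, v) \<in> D \<Longrightarrow> (v, u) \<notin> D"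
  shows "is_orientation G D"
  using assms unfolding is_orientation_def by blast

lemma orientation_covers_edge:
  "is_orientation G D \<Longrightarrow> {a, b} \<in> snd G \<Longrightarrow> a \<noteq> b \<Longrightarrow> (a, b) \<in> D \<or> (b, a) \<in> D"
  unfolding is_orientation_def by blast

lemma orientation_subset_vertices:
  "is_orientation G D \<Longrightarrow> \<Union>(snd G) \<subseteq> fst G \<Longrightarrow> D \<subseteq> fst G \<times> fst G"
  unfolding is_orientation_def by blast

lemma orientation_has_out_arc:
  assumes "is_orientation G D" "finite D" "{a, b} \<in> snd G" "a \<noteq> b"
  shows "0 < outdeg D a \<or> 0 < outdeg D b"
  using orientation_covers_edge[OF assms(1,3,4)] assms(2) by (auto simp: outdeg_pos_iff)

lemma outdeg_ge_2_if_more_edges_than_vertices: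
  assumes D: "is_orientation G D" "finite D"
    and F: "F \<subseteq> snd G" "\<forall>e\<in>F. card e = 2" "\<Union>F \<subseteq> W" "finite W" "card W < card F"
  shows "\<exists>v\<in>W. 2 \<le> outdeg D v"
proof (rule ccontr)
  assume "\<not> ?thesis"
  then have out: "outdeg D v \<le> Suc 0" if "v \<in> W" for v
    using that by (auto simp: not_le)
  have "\<exists>u v. e = {u, v} \<and> (u, v) \<in> D" if "e \<in> F" for e
  proof -
    from F(2) that obtain a b where ab: "e = {a, b}" "a \<noteq> b"
      by (auto simp: card_2_iff)
    then have "(a, b) \<in> D \<or> (b, a) \<in> D"
      using orientation_covers_edge[OF D(1)] F(1) that by blast
    then show ?thesis using ab(1) by (metis insert_commute)
  qed
  then obtain tail where tail: "\<forall>e\<in>F. \<exists>v. e = {tail e, v} \<and> (tail e, v) \<in> D"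
    using bchoice[of F "\<lambda>e u. \<exists>v. e = {u, v} \<and> (u, v) \<in> D"] by blast
  have "inj_on tail F"
  proof (rule inj_onI)
    fix e e' assume "e \<in> F" "e' \<in> F" and same: "tail e = tail e'"
    obtain v where e: "e = {tail e, v}" "(tail e, v) \<in> D"
      using tail \<open>e \<in> F\<close> by blast
    obtain v' where e': "e' = {tail e', v'}" "(tail e', v') \<in> D"
      using tail \<open>e' \<in> F\<close> by blast
    have "tail e \<in> W" using F(3) \<open>e \<in> F\<close> e(1) by blast
    then have "card {w. (tail e, w) \<in> D} \<le> Suc 0" using out by (simp add: outdeg_def)
    moreover have "v \<in> {w. (tail e, w) \<in> D}" "v' \<in> {w. (tail e, w) \<in> D}"
      using e(2) e'(2) same by simp_all
    ultimately have "v = v'"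
      using card_le_Suc0_iff_eq[OF finite_out_neighbours[OF D(2)]] by blast
    then show "e = e'" using e(1) e'(1) same by simp
  qed
  moreover have "tail ` F \<subseteq> W"
  proof
    fix u assume "u \<in> tail ` F"
    then obtain e v where "e \<in> F" "u = tail e" "e = {u, v}" using tail by blast
    then show "u \<in> W" using F(3) by blast
  qed
  ultimately have "card F \<le> card W" using F(4) by (rule card_inj_on_le)
  then show False using F(5) by simp
qed

lemma eulerian_empty: "eulerian V {}"
  by (simp add: eulerian_def indeg_def outdeg_def)

lemma eulerian_out_arc:
  assumes "finite A" "Range A \<subseteq> V" "eulerian V A" "(u, v) \<in> A"
  shows "\<exists>w. (v, w) \<in> A"
proof -
  have "0 < indeg A v"
    using assms(1,4) by (auto simp: indeg_def card_gt_0_iff finite_in_neighbours)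
  moreover have "v \<in> V" using assms(2,4) by blast
  ultimately have "0 < outdeg A v" using assms(3) by (simp add: eulerian_def)
  then show ?thesis using assms(1) by (simp add: outdeg_pos_iff)
qed

lemma eulerian_empty_if_increasing:
  fixes \<phi> :: "'a \<Rightarrow> 'b::linorder"
  assumes "finite A" "Range A \<subseteq> V" "eulerian V A" and incr: "\<forall>(u, v)\<in>A. \<phi> u < \<phi> v"
  shows "A = {}"
proof (rule ccontr)
  assume "A \<noteq> {}"
  then obtain u v where uv: "(u, v) \<in> A" and max: "\<phi> v = Max ((\<phi> \<circ> snd) ` A)"
    using Max_in[of "(\<phi> \<circ> snd) ` A"] assms(1) by fastforce
  obtain w where vw: "(v, w) \<in> A" using eulerian_out_arc[OF assms(1-3) uv] by blast
  then have "\<phi> w \<in> (\<phi> \<circ> snd) ` A" by force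
  then have "\<phi> w \<le> \<phi> v" unfolding max using assms(1) by simp
  moreover have "\<phi> v < \<phi> w" using incr vw by blast
  ultimately show False by simp
qed

lemma AT_orientation_if_eulerian_even:
  assumes "finite D" and even: "\<And>A. A \<subseteq> D \<Longrightarrow> eulerian (fst G) A \<Longrightarrow> even (card A)"
  shows "AT_orientation G D"
proof -
  let ?even = "{A. A \<subseteq> D \<and> eulerian (fst G) A \<and> even (card A)}"
  have "?even \<subseteq> Pow D" by blast
  then have "finite ?even" by (rule finite_subset) (simp add: assms(1))
  moreover have "{} \<in> ?even" by (simp add: eulerian_empty)
  ultimately have "card ?even \<noteq> 0" by auto
  moreover have odd: "{A. A \<subseteq> D \<and> eulerian (fst G) A \<and> odd (card A)} = {}"
    using even by blast
  ultimately show ?thesis unfolding AT_orientation_def odd by simp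
qed

lemma AT_number_eqI:
  assumes "is_orientation G D" "AT_orientation G D" "\<forall>v\<in>fst G. outdeg D v + 1 \<le> k"
    and lower: "\<And>D'. is_orientation G D' \<Longrightarrow> \<exists>v\<in>fst G. k \<le> outdeg D' v + 1"
  shows "AT_number G = k"
  unfolding AT_number_def
proof (rule Least_equality)
  show "\<exists>D. is_orientation G D \<and> AT_orientation G D \<and> (\<forall>v\<in>fst G. outdeg D v + 1 \<le> k)"
    using assms(1-3) by blast
next
  fix l assume "\<exists>D. is_orientation G D \<and> AT_orientation G D \<and> (\<forall>v\<in>fst G. outdeg D v + 1 \<le> l)"
  then show "k \<le> l" using lower by fastforce
qed

section \<open>Acyclic orientations from a potential\<close>

definition potential_orientation :: "'a graph \<Rightarrow> ('a \<Rightarrow> 'b::linorder) \<Rightarrow> ('a \<times> 'a) set" where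
  "potential_orientation G \<phi> = {(u, v). {u, v} \<in> snd G \<and> \<phi> u < \<phi> v}"

lemma is_orientation_potential_orientation:
  assumes "\<And>u v. {u, v} \<in> snd G \<Longrightarrow> u \<noteq> v \<Longrightarrow> \<phi> u \<noteq> \<phi> v"
  shows "is_orientation G (potential_orientation G \<phi>)"
proof (rule is_orientationI)
  fix u v assume "{u, v} \<in> snd G" "u \<noteq> v"
  moreover have "{v, u} = {u, v}" by (rule insert_commute)
  ultimately show "(u, v) \<in> potential_orientation G \<phi> \<or> (v, u) \<in> potential_orientation G \<phi>"
    using assms by (auto simp: potential_orientation_def neq_iff)
qed (auto simp: potential_orientation_def)

lemma AT_orientation_potential_orientation:
  assumes "finite (fst G)" "\<Union>(snd G) \<subseteq> fst G"
  shows "AT_orientation G (potential_orientation G \<phi>)"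
proof -
  let ?D = "potential_orientation G \<phi>"
  have sub: "?D \<subseteq> fst G \<times> fst G" using assms(2) by (auto simp: potential_orientation_def)
  then have "finite ?D" by (rule finite_subset) (simp add: assms(1))
  then show ?thesis
  proof (rule AT_orientation_if_eulerian_even)
    fix A assume A: "A \<subseteq> ?D" "eulerian (fst G) A"
    have "A = {}"
    proof (rule eulerian_empty_if_increasing[of A "fst G" \<phi>])
      show "finite A" using A(1) \<open>finite ?D\<close> by (rule finite_subset)
      show "Range A \<subseteq> fst G" using A(1) sub by blast
      show "\<forall>(u, v)\<in>A. \<phi> u < \<phi> v" using A(1) by (auto simp: potential_orientation_def)
    qed (rule A(2))
    then show "even (card A)" by simp
  qed
qed

section \<open>Directed cycles\<close>

definition cycle_arcs :: "(nat \<Rightarrow> 'a) \<Rightarrow> nat \<Rightarrow> ('a \<times> 'a) set" where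
  "cycle_arcs c N = (\<lambda>k. (c k, c (Suc k mod N))) ` {..<N}"

lemma cycle_arcs_subset: "cycle_arcs c N \<subseteq> c ` {..<N} \<times> c ` {..<N}"
proof
  fix a assume "a \<in> cycle_arcs c N"
  then obtain k where "k < N" "a = (c k, c (Suc k mod N))" by (auto simp: cycle_arcs_def)
  moreover have "Suc k mod N < N" using \<open>k < N\<close> by simp
  ultimately show "a \<in> c ` {..<N} \<times> c ` {..<N}" by simp
qed

lemma card_cycle_arcs: "inj_on c {..<N} \<Longrightarrow> card (cycle_arcs c N) = N"
  unfolding cycle_arcs_def by (subst card_image) (auto simp: inj_on_def)

lemma outdeg_cycle_arcs_le_1:
  assumes "inj_on c {..<N}"
  shows "outdeg (cycle_arcs c N) v \<le> 1"
proof -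
  have "finite {w. (v, w) \<in> cycle_arcs c N}"
    by (rule finite_out_neighbours) (simp add: cycle_arcs_def)
  moreover have "w = w'" if "(v, w) \<in> cycle_arcs c N" "(v, w') \<in> cycle_arcs c N" for w w'
    using that assms by (auto simp: cycle_arcs_def dest: inj_onD)
  ultimately show ?thesis unfolding outdeg_def by (simp add: card_le_Suc0_iff_eq)
qed

lemma mod_successor_closed:
  assumes step: "\<And>j. j < N \<Longrightarrow> P j \<Longrightarrow> P (Suc j mod N)" and "k < N" "P k" "j < N"
  shows "P j"
proof -
  have "P ((k + d) mod N)" for d
  proof (induction d)
    case 0
    then show ?case using \<open>k < N\<close> \<open>P k\<close> by simp
  next
    case (Suc d)
    then have "P (Suc ((k + d) mod N) mod N)" using step \<open>k < N\<close> by simp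
    then show ?case by (simp add: mod_Suc_eq)
  qed
  from this[of "N - k + j"] show "P j" using \<open>k < N\<close> \<open>j < N\<close> by simp
qed

lemma eulerian_subset_cycle_arcs:
  assumes inj: "inj_on c {..<N}" and "c ` {..<N} \<subseteq> V"
    and A: "A \<subseteq> cycle_arcs c N" "eulerian V A"
  shows "A = {} \<or> A = cycle_arcs c N"
proof -
  let ?arc = "\<lambda>k. (c k, c (Suc k mod N))"
  have sub: "A \<subseteq> c ` {..<N} \<times> c ` {..<N}" using A(1) cycle_arcs_subset by (rule order_trans)
  then have fin: "finite A" by (rule finite_subset) simp
  have "Range A \<subseteq> c ` {..<N}" using sub by auto
  then have range: "Range A \<subseteq> V" using assms(2) by (rule order_trans)
  have next_arc: "?arc (Suc k mod N) \<in> A" if k: "k < N" and arc: "?arc k \<in> A" for k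
  proof -
    obtain w where w: "(c (Suc k mod N), w) \<in> A"
      using eulerian_out_arc[OF fin range A(2) arc] by blast
    then obtain j where j: "j < N" "c (Suc k mod N) = c j" "w = c (Suc j mod N)"
      using A(1) by (auto simp: cycle_arcs_def)
    then have "j = Suc k mod N" using inj k by (auto dest: inj_onD)
    then show ?thesis using w j(3) by simp
  qed
  show ?thesis
  proof (cases "A = {}")
    case False
    then obtain k where "k < N" "?arc k \<in> A" using A(1) by (auto simp: cycle_arcs_def)
    then have "?arc j \<in> A" if "j < N" for j
      using mod_successor_closed[where P = "\<lambda>j. ?arc j \<in> A"] next_arc that by blast
    then have "cycle_arcs c N \<subseteq> A" by (auto simp: cycle_arcs_def)
    then show ?thesis using A(1) by blast
  qed simp
qed

lemma AT_orientation_even_cycle: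
  assumes "inj_on c {..<N}" "c ` {..<N} \<subseteq> fst G" "even N"
  shows "AT_orientation G (cycle_arcs c N)"
proof (rule AT_orientation_if_eulerian_even)
  show "finite (cycle_arcs c N)" by (simp add: cycle_arcs_def)
  fix A assume "A \<subseteq> cycle_arcs c N" "eulerian (fst G) A"
  then have "A = {} \<or> A = cycle_arcs c N" using assms(1,2) by (intro eulerian_subset_cycle_arcs)
  then show "even (card A)" using assms(3) by (auto simp: card_cycle_arcs[OF assms(1)])
qed

lemma fst_path_graph [simp]: "fst (path_graph n) = {..<n}"
  by (auto simp: path_graph_def)

lemma path_graph_edge_iff:
  "{i, j} \<in> snd (path_graph n) \<longleftrightarrow> (j = Suc i \<or> i = Suc j) \<and> max i j < n"
  by (auto simp: path_graph_def doubleton_eq_iff)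

lemma path_graph_edges_subset: "\<Union>(snd (path_graph n)) \<subseteq> fst (path_graph n)"
  by (auto simp: path_graph_def)

lemma finite_path_graph_edges: "finite (snd (path_graph n))"
  by (rule finite_subset[of _ "Pow {..<n}"]) (auto simp: path_graph_def)

lemma fst_sprod: "fst (sprod G H) = (Inl ` fst G \<union> Inr ` snd G) \<times> fst H"
  by (simp add: sprod_def subdiv_def)

lemma subdiv_edge_iff:
  "{x, y} \<in> snd (subdiv G) \<longleftrightarrow>
     (\<exists>u e. e \<in> snd G \<and> u \<in> e \<and> (x = Inl u \<and> y = Inr e \<or> x = Inr e \<and> y = Inl u))"
  by (auto simp: subdiv_def doubleton_eq_iff)

lemma sprod_edge_iff:
  "{x, y} \<in> snd (sprod G H) \<longleftrightarrow>
     fst x = fst y \<and> fst x \<in> Inl ` fst G \<and> {snd x, snd y} \<in> snd H \<or>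
     snd x = snd y \<and> snd x \<in> fst H \<and> {fst x, fst y} \<in> snd (subdiv G)"
  unfolding sprod_def snd_conv mem_Collect_eq
  by (cases x; cases y) (fastforce simp: doubleton_eq_iff insert_commute)

lemma sprod_edges_subset:
  assumes "\<Union>(snd G) \<subseteq> fst G" "\<Union>(snd H) \<subseteq> fst H"
  shows "\<Union>(snd (sprod G H)) \<subseteq> fst (sprod G H)"
proof
  fix x assume "x \<in> \<Union>(snd (sprod G H))"
  then obtain e where e: "x \<in> e" "e \<in> snd (sprod G H)" by blast
  moreover obtain p q where "e = {p, q}"
    using e(2) unfolding sprod_def snd_conv mem_Collect_eq by blast
  ultimately have "{x, q} \<in> snd (sprod G H) \<or> {x, p} \<in> snd (sprod G H)"
    by (auto simp: insert_commute)
  then obtain y where "{x, y} \<in> snd (sprod G H)" by blast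
  then show "x \<in> fst (sprod G H)"
    using assms unfolding sprod_edge_iff subdiv_edge_iff fst_sprod by (cases x) auto
qed

abbreviation path_sprod :: "nat \<Rightarrow> nat \<Rightarrow> ((nat + nat set) \<times> nat) graph" where
  "path_sprod n m \<equiv> sprod (path_graph n) (path_graph m)"

lemma finite_path_sprod: "finite (fst (path_sprod n m))"
  by (simp add: fst_sprod finite_path_graph_edges)

lemma path_sprod_edges_subset: "\<Union>(snd (path_sprod n m)) \<subseteq> fst (path_sprod n m)"
  by (intro sprod_edges_subset path_graph_edges_subset)

lemma finite_path_sprod_orientation: "is_orientation (path_sprod n m) D \<Longrightarrow> finite D"
  using orientation_subset_vertices[OF _ path_sprod_edges_subset] finite_path_sprod
  by (meson finite_SigmaI finite_subset)

lemma path_sprod_edgeE: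
  assumes "{x, y} \<in> snd (path_sprod n m)"
  obtains (copy) i j where "i < n" "Suc j < m" "{x, y} = {(Inl i, j), (Inl i, Suc j)}"
    | (subdiv) a i j where "Suc i < n" "j < m" "a = i \<or> a = Suc i"
        "{x, y} = {(Inl a, j), (Inr {i, Suc i}, j)}"
proof (cases x; cases y)
  fix x1 x2 y1 y2 assume xy: "x = (x1, x2)" "y = (y1, y2)"
  from assms consider
      "x1 = y1" "x1 \<in> Inl ` {..<n}" "{x2, y2} \<in> snd (path_graph m)"
    | "x2 = y2" "x2 < m" "{x1, y1} \<in> snd (subdiv (path_graph n))"
    unfolding xy sprod_edge_iff by auto
  then show thesis
  proof cases
    case 1
    then show thesis using copy unfolding xy path_graph_edge_iff by (auto simp: insert_commute)
  next
    case 2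
    then show thesis using subdiv unfolding xy subdiv_edge_iff
      by (auto simp: path_graph_def insert_commute)
  qed
qed

section \<open>An acyclic orientation of maximum outdegree 2\<close>

definition sprod_potential :: "('b \<Rightarrow> nat) \<Rightarrow> ('a + 'a set) \<times> 'b \<Rightarrow> nat" where
  "sprod_potential \<psi> x = (case fst x of Inl _ \<Rightarrow> Suc (\<psi> (snd x)) | Inr _ \<Rightarrow> 0)"

lemma sprod_potential_simps [simp]:
  "sprod_potential \<psi> (Inl u, w) = Suc (\<psi> w)"
  "sprod_potential \<psi> (Inr e, w) = 0"
  by (simp_all add: sprod_potential_def)

lemma sprod_potential_separates:
  assumes "\<And>w w'. {w, w'} \<in> snd H \<Longrightarrow> w \<noteq> w' \<Longrightarrow> \<psi> w \<noteq> \<psi> w'"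
    and "{x, y} \<in> snd (sprod G H)" "x \<noteq> y"
  shows "sprod_potential \<psi> x \<noteq> sprod_potential \<psi> y"
  using assms unfolding sprod_edge_iff subdiv_edge_iff
  by (cases x; cases y) auto

lemma out_arcs_sprod_potential_Inl:
  "{y. ((Inl u, w), y) \<in> potential_orientation (sprod G H) (sprod_potential \<psi>)}
     \<subseteq> Pair (Inl u) ` {w'. (w, w') \<in> potential_orientation H \<psi>}"
proof
  fix y assume "y \<in> {y. ((Inl u, w), y) \<in> potential_orientation (sprod G H) (sprod_potential \<psi>)}"
  then show "y \<in> Pair (Inl u) ` {w'. (w, w') \<in> potential_orientation H \<psi>}"
    unfolding potential_orientation_def sprod_edge_iff subdiv_edge_iff
    by (cases y rule: prod.exhaust[case_product sum.exhaust]) auto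
qed

lemma out_arcs_sprod_potential_Inr:
  "{y. ((Inr e, w), y) \<in> potential_orientation (sprod G H) (sprod_potential \<psi>)}
     \<subseteq> (\<lambda>a. (Inl a, w)) ` e"
proof
  fix y assume "y \<in> {y. ((Inr e, w), y) \<in> potential_orientation (sprod G H) (sprod_potential \<psi>)}"
  then show "y \<in> (\<lambda>a. (Inl a, w)) ` e"
    unfolding potential_orientation_def sprod_edge_iff subdiv_edge_iff
    by (cases y rule: prod.exhaust[case_product sum.exhaust]) auto
qed

lemma out_arcs_path_potential:
  "{w'. (w, w') \<in> potential_orientation (path_graph m) id} \<subseteq> {Suc w}"
  by (auto simp: potential_orientation_def path_graph_edge_iff)

lemma outdeg_path_sprod_potential_le_2:
  assumes "v \<in> fst (path_sprod n m)"
  shows "outdeg (potential_orientation (path_sprod n m) (sprod_potential id)) v \<le> 2"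
proof -
  let ?D = "potential_orientation (path_sprod n m) (sprod_potential id)"
  obtain x w where v: "v = (x, w)" by fastforce
  show ?thesis
  proof (cases x)
    case (Inl u)
    have "{y. (v, y) \<in> ?D} \<subseteq> Pair (Inl u) ` {Suc w}"
      unfolding v Inl
      using out_arcs_sprod_potential_Inl image_mono[OF out_arcs_path_potential] by (rule order_trans)
    from outdeg_le_card[OF this] show ?thesis by simp
  next
    case (Inr e)
    then obtain i where e: "e = {i, Suc i}"
      using assms unfolding v fst_sprod by (auto simp: path_graph_def)
    have "{y. (v, y) \<in> ?D} \<subseteq> (\<lambda>a. (Inl a, w)) ` {i, Suc i}"
      unfolding v Inr e by (rule out_arcs_sprod_potential_Inr)
    from outdeg_le_card[OF this] show ?thesis by (simp add: card_image inj_on_def)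
  qed
qed

lemma path_sprod_has_AT_orientation_outdeg_le_2:
  "\<exists>D. is_orientation (path_sprod n m) D \<and> AT_orientation (path_sprod n m) D \<and>
     (\<forall>v\<in>fst (path_sprod n m). outdeg D v \<le> 2)"
proof (intro exI conjI ballI)
  let ?D = "potential_orientation (path_sprod n m) (sprod_potential id)"
  show "is_orientation (path_sprod n m) ?D"
    by (intro is_orientation_potential_orientation sprod_potential_separates) simp_all
  show "AT_orientation (path_sprod n m) ?D"
    by (intro AT_orientation_potential_orientation finite_path_sprod path_sprod_edges_subset)
  show "outdeg ?D v \<le> 2" if "v \<in> fst (path_sprod n m)" for v
    using that by (rule outdeg_path_sprod_potential_le_2)
qed

section \<open>Lower bounds\<close>

lemma path_sprod_orientation_has_out_arc:
  assumes "2 \<le> n" "2 \<le> m" "is_orientation (path_sprod n m) D"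
  shows "\<exists>v\<in>fst (path_sprod n m). 1 \<le> outdeg D v"
proof -
  let ?a = "(Inl 0, 0)" and ?b = "(Inl 0, 1)"
  have "{?a, ?b} \<in> snd (path_sprod n m)"
    using assms(1,2) by (simp add: sprod_edge_iff path_graph_edge_iff fst_sprod)
  then have "0 < outdeg D ?a \<or> 0 < outdeg D ?b"
    using assms(3) finite_path_sprod_orientation by (intro orientation_has_out_arc) auto
  moreover have "?a \<in> fst (path_sprod n m)" "?b \<in> fst (path_sprod n m)"
    using assms(1,2) by (simp_all add: fst_sprod)
  ultimately show ?thesis by force
qed

lemma path_sprod_dense_subgraph:
  assumes "2 \<le> n" "2 \<le> m" "\<not> (n = 2 \<and> m = 2)"
  obtains F W where "F \<subseteq> snd (path_sprod n m)" "\<forall>e\<in>F. card e = 2"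
    "\<Union>F \<subseteq> W" "W \<subseteq> fst (path_sprod n m)" "finite W" "card W < card F"
proof (cases "3 \<le> m")
  case True
  \<comment> \<open>a copy of \<open>P\<^sub>2 +\<^sub>S P\<^sub>3\<close>: 10 edges on 9 vertices\<close>
  let ?e = "Inr {0, 1} :: nat + nat set"
  let ?F = "{{(Inl 0, 0 :: nat), (Inl 0, 1)}, {(Inl 0, 1), (Inl 0, 2)},
             {(Inl 1, 0), (Inl 1, 1)}, {(Inl 1, 1), (Inl 1, 2)},
             {(Inl 0, 0), (?e, 0)}, {(Inl 0, 1), (?e, 1)}, {(Inl 0, 2), (?e, 2)},
             {(Inl 1, 0), (?e, 0)}, {(Inl 1, 1), (?e, 1)}, {(Inl 1, 2), (?e, 2)}}"
  let ?W = "{Inl 0, Inl 1, ?e} \<times> {0, 1, 2 :: nat}"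
  show ?thesis
  proof (rule that[of ?F ?W])
    show "?F \<subseteq> snd (path_sprod n m)"
      using assms(1) True by (simp add: sprod_edge_iff subdiv_edge_iff path_graph_edge_iff fst_sprod)
    show "?W \<subseteq> fst (path_sprod n m)"
      using assms(1) True by (auto simp: fst_sprod path_graph_edge_iff)
    show "card ?W < card ?F" by (simp add: doubleton_eq_iff)
  qed auto
next
  case False
  then have "3 \<le> n" using assms by simp
  \<comment> \<open>a copy of \<open>P\<^sub>3 +\<^sub>S P\<^sub>2\<close>: 11 edges on 10 vertices\<close>
  let ?e = "Inr {0, 1} :: nat + nat set" and ?f = "Inr {1, 2} :: nat + nat set"
  let ?F = "{{(Inl 0, 0 :: nat), (Inl 0, 1)}, {(Inl 1, 0), (Inl 1, 1)}, {(Inl 2, 0), (Inl 2, 1)},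
             {(Inl 0, 0), (?e, 0)}, {(Inl 0, 1), (?e, 1)}, {(Inl 1, 0), (?e, 0)}, {(Inl 1, 1), (?e, 1)},
             {(Inl 1, 0), (?f, 0)}, {(Inl 1, 1), (?f, 1)}, {(Inl 2, 0), (?f, 0)}, {(Inl 2, 1), (?f, 1)}}"
  let ?W = "{Inl 0, Inl 1, Inl 2, ?e, ?f} \<times> {0, 1 :: nat}"
  show ?thesis
  proof (rule that[of ?F ?W])
    show "?F \<subseteq> snd (path_sprod n m)"
      using assms(2) \<open>3 \<le> n\<close> by (simp add: sprod_edge_iff subdiv_edge_iff path_graph_edge_iff fst_sprod)
    show "?W \<subseteq> fst (path_sprod n m)"
      using assms(2) \<open>3 \<le> n\<close> by (auto simp: fst_sprod path_graph_edge_iff)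
    show "card ?W < card ?F" by (simp add: doubleton_eq_iff)
  qed auto
qed

lemma path_sprod_orientation_has_outdeg_ge_2:
  assumes "2 \<le> n" "2 \<le> m" "\<not> (n = 2 \<and> m = 2)" "is_orientation (path_sprod n m) D"
  shows "\<exists>v\<in>fst (path_sprod n m). 2 \<le> outdeg D v"
proof -
  obtain F W where F: "F \<subseteq> snd (path_sprod n m)" "\<forall>e\<in>F. card e = 2" "\<Union>F \<subseteq> W"
      and W: "W \<subseteq> fst (path_sprod n m)" "finite W" "card W < card F"
    using path_sprod_dense_subgraph[OF assms(1-3)] by blast
  then obtain v where "v \<in> W" "2 \<le> outdeg D v"
    using outdeg_ge_2_if_more_edges_than_vertices[OF assms(4) finite_path_sprod_orientation[OF assms(4)]]
    by blast
  then show ?thesis using W(1) by blast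
qed

section \<open>The hexagon \<open>P\<^sub>2 +\<^sub>S P\<^sub>2\<close>\<close>

definition hexagon :: "((nat + nat set) \<times> nat) list" where
  "hexagon = [(Inl 0, 0), (Inl 0, 1), (Inr {0, 1}, 1), (Inl 1, 1), (Inl 1, 0), (Inr {0, 1}, 0)]"

lemma cycle_arcs_hexagon:
  "cycle_arcs (nth hexagon) 6 =
     {((Inl 0, 0), (Inl 0, 1)), ((Inl 0, 1), (Inr {0, 1}, 1)), ((Inr {0, 1}, 1), (Inl 1, 1)),
      ((Inl 1, 1), (Inl 1, 0)), ((Inl 1, 0), (Inr {0, 1}, 0)), ((Inr {0, 1}, 0), (Inl 0, 0))}"
  unfolding cycle_arcs_def hexagon_def by (simp add: lessThan_nat_numeral lessThan_Suc) blast

lemma inj_on_hexagon: "inj_on (nth hexagon) {..<6}"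
  by (rule inj_on_nth) (auto simp: hexagon_def)

lemma path_graph_2_edges: "snd (path_graph 2) = {{0, 1}}"
  by (auto simp: path_graph_def)

lemma fst_path_sprod_2_2: "fst (path_sprod 2 2) = {Inl 0, Inl 1, Inr {0, 1}} \<times> {0, 1}"
  by (auto simp: fst_sprod path_graph_2_edges lessThan_nat_numeral)

lemma arc_either_direction_cong:
  "{u, v} = {p, q} \<Longrightarrow> ((u, v) \<in> D \<or> (v, u) \<in> D) \<longleftrightarrow> ((p, q) \<in> D \<or> (q, p) \<in> D)"
  by (auto simp: doubleton_eq_iff)

lemma is_orientation_hexagon: "is_orientation (path_sprod 2 2) (cycle_arcs (nth hexagon) 6)"
proof -
  let ?D = "{((Inl 0, 0), (Inl 0, 1)), ((Inl 0, 1), (Inr {0, 1}, 1)), ((Inr {0, 1}, 1), (Inl 1, 1)),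
    ((Inl 1, 1), (Inl 1, 0)), ((Inl 1, 0), (Inr {0, 1}, 0)), ((Inr {0, 1}, 0), (Inl 0, 0))}
    :: (((nat + nat set) \<times> nat) \<times> ((nat + nat set) \<times> nat)) set"
  have "is_orientation (path_sprod 2 2) ?D"
  proof (rule is_orientationI)
    fix u v assume "(u, v) \<in> ?D"
    then show "{u, v} \<in> snd (path_sprod 2 2) \<and> u \<noteq> v"
      by (elim insertE emptyE) (simp_all add: sprod_edge_iff subdiv_edge_iff path_graph_edge_iff)
  next
    fix u v assume "{u, v} \<in> snd (path_sprod 2 2)"
    then show "(u, v) \<in> ?D \<or> (v, u) \<in> ?D"
    proof (cases rule: path_sprod_edgeE)
      case (copy i j)
      have "i = 0 \<or> i = 1" "j = 0" using copy(1,2) by auto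
      then show ?thesis unfolding arc_either_direction_cong[OF copy(3)] by (elim disjE) simp_all
    next
      case (subdiv a i j)
      have "i = 0" "j = 0 \<or> j = 1" "a = 0 \<or> a = 1" using subdiv(1-3) by auto
      then show ?thesis unfolding arc_either_direction_cong[OF subdiv(4)] by (elim disjE) simp_all
    qed
  qed auto
  then show ?thesis unfolding cycle_arcs_hexagon .
qed

lemma path_sprod_2_2_has_AT_orientation_outdeg_le_1:
  "\<exists>D. is_orientation (path_sprod 2 2) D \<and> AT_orientation (path_sprod 2 2) D \<and>
     (\<forall>v\<in>fst (path_sprod 2 2). outdeg D v \<le> 1)"
proof (intro exI conjI ballI)
  show "is_orientation (path_sprod 2 2) (cycle_arcs (nth hexagon) 6)"
    by (rule is_orientation_hexagon)
  have "nth hexagon ` {..<6} \<subseteq> fst (path_sprod 2 2)"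
    by (simp add: hexagon_def fst_path_sprod_2_2 lessThan_nat_numeral lessThan_Suc)
  then show "AT_orientation (path_sprod 2 2) (cycle_arcs (nth hexagon) 6)"
    by (intro AT_orientation_even_cycle inj_on_hexagon) simp_all
  show "outdeg (cycle_arcs (nth hexagon) 6) v \<le> 1" for v
    using inj_on_hexagon by (rule outdeg_cycle_arcs_le_1)
qed

theorem corollary3p3:
  fixes n m :: nat
  assumes "n \<ge> 2" and "m \<ge> 2"
  shows "AT_number (sprod (path_graph n) (path_graph m)) = (if n = 2 \<and> m = 2 then 2 else 3)"
proof (cases "n = 2 \<and> m = 2")
  case True
  obtain D where "is_orientation (path_sprod 2 2) D" "AT_orientation (path_sprod 2 2) D"
      "\<forall>v\<in>fst (path_sprod 2 2). outdeg D v \<le> 1"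
    using path_sprod_2_2_has_AT_orientation_outdeg_le_1 by blast
  moreover have "\<exists>v\<in>fst (path_sprod 2 2). 2 \<le> outdeg D' v + 1"
    if "is_orientation (path_sprod 2 2) D'" for D'
    using path_sprod_orientation_has_out_arc[OF _ _ that] by simp
  ultimately have "AT_number (path_sprod 2 2) = 2" by (intro AT_number_eqI) auto
  then show ?thesis using True by simp
next
  case False
  obtain D where "is_orientation (path_sprod n m) D" "AT_orientation (path_sprod n m) D"
      "\<forall>v\<in>fst (path_sprod n m). outdeg D v \<le> 2"
    using path_sprod_has_AT_orientation_outdeg_le_2 by blast
  moreover have "\<exists>v\<in>fst (path_sprod n m). 3 \<le> outdeg D' v + 1"
    if "is_orientation (path_sprod n m) D'" for D'
    using path_sprod_orientation_has_outdeg_ge_2[OF assms False that] by simp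
  ultimately have "AT_number (path_sprod n m) = 3" by (intro AT_number_eqI) auto
  then show ?thesis using False by simp
qed

end
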